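(* Let $\alpha,\beta\in\mathbb{R}$ with $\alpha\neq 0$, and let $G_1$ be the connected, simply connected Lie group whose Lie algebra $\mathfrak{g}_1$ has a basis $\{e_1,e_2,e_3\}$ with $[e_1,e_2]=\alpha e_1-\beta e_3$, $[e_1,e_3]=-\alpha e_1-\beta e_2$, $[e_2,e_3]=\beta e_1+\alpha e_2+\alpha e_3$, equipped with the left-invariant Lorentzian metric $g$ for which $\{e_1,e_2,e_3\}$ is pseudo-orthonormal with $e_3$ timelike, and with the product structure $J$. Let $\lambda_0,c\in\mathbb{R}$. Then there exists a derivation $D$ of $\mathfrak{g}_1$ with $\widetilde{\mathrm{Ric}}^0=(s^0\lambda_0+c)\mathrm{Id}+D$ (i.e. $(G_1,g,J)$ is an algebraic Schouten soliton associated to the canonical connection $\nabla^0$) if and only if $\beta=0$ and $c=-\frac12\alpha^2+2\alpha^2\lambda_0$.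
   Context: Pseudo-orthonormal means $g(e_1,e_1)=g(e_2,e_2)=1$, $g(e_3,e_3)=-1$, $g(e_i,e_j)=0$ for $i\neq j$; left-invariant tensors are identified with their values on $\mathfrak{g}$. $\nabla$ is the Levi-Civita connection of $g$. The product structure $J$ is the left-invariant endomorphism with $Je_1=e_1$, $Je_2=e_2$, $Je_3=-e_3$. The canonical connection is $\nabla^0_XY=\nabla_XY-\frac12(\nabla_XJ)JY$, and the Kobayashi–Nomizu connection is $\nabla^1_XY=\nabla^0_XY-\frac14[(\nabla_YJ)JX-(\nabla_{JY}J)X]$. For $k=0,1$: $R^k(X,Y)Z=\nabla^k_X\nabla^k_YZ-\nabla^k_Y\nabla^k_XZ-\nabla^k_{[X,Y]}Z$; $\rho^k(X,Y)=-g(R^k(X,e_1)Y,e_1)-g(R^k(X,e_2)Y,e_2)+g(R^k(X,e_3)Y,e_3)$; $\widetilde\rho^k(X,Y)=\frac12(\rho^k(X,Y)+\rho^k(Y,X))$; $\widetilde{\mathrm{Ric}}^k$ is defined by $\widetilde\rho^k(X,Y)=g(\widetilde{\mathrm{Ric}}^k(X),Y)$; and $s^k=\widetilde\rho^k(e_1,e_1)+\widetilde\rho^k(e_2,e_2)-\widetilde\rho^k(e_3,e_3)$. A derivation of $\mathfrak{g}$ is a linear map $D$ with $D[X,Y]=[DX,Y]+[X,DY]$. $(G,g,J)$ is an algebraic Schouten soliton associated to $\nabla^k$ (with real constants $\lambda_0,c$) if $\widetilde{\mathrm{Ric}}^k=(s^k\lambda_0+c)\mathrm{Id}+D$ for some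 derivation $D$. *)

theory Defs
  imports "HOL-Analysis.Analysis"
begin

text \<open>The Lie algebra is modelled as real^3 with basis e1, e2, e3 (standard basis).\<close>

definition e1 :: "real^3" where "e1 = vector [1, 0, 0]"
definition e2 :: "real^3" where "e2 = vector [0, 1, 0]"
definition e3 :: "real^3" where "e3 = vector [0, 0, 1]"

definition gL :: "real^3 \<Rightarrow> real^3 \<Rightarrow> real" where
  "gL x y = x$1 * y$1 + x$2 * y$2 - x$3 * y$3"

text \<open>Lie bracket of g1: bilinear antisymmetric extension of the structure equations.\<close>
definition br1 :: "real \<Rightarrow> real \<Rightarrow> real^3 \<Rightarrow> real^3 \<Rightarrow> real^3" where
  "br1 \<alpha> \<beta> x y =
     (x$1 * y$2 - x$2 * y$1) *\<^sub>R (\<alpha> *\<^sub>R e1 - \<beta> *\<^sub>R e3)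
   + (x$1 * y$3 - x$3 * y$1) *\<^sub>R (- \<alpha> *\<^sub>R e1 - \<beta> *\<^sub>R e2)
   + (x$2 * y$3 - x$3 * y$2) *\<^sub>R (\<beta> *\<^sub>R e1 + \<alpha> *\<^sub>R e2 + \<alpha> *\<^sub>R e3)"

definition koszul :: "(real^3 \<Rightarrow> real^3 \<Rightarrow> real^3) \<Rightarrow> real^3 \<Rightarrow> real^3 \<Rightarrow> real^3 \<Rightarrow> real" where
  "koszul br X Y Z = (gL (br X Y) Z - gL (br Y Z) X + gL (br Z X) Y) / 2"

definition LC :: "(real^3 \<Rightarrow> real^3 \<Rightarrow> real^3) \<Rightarrow> real^3 \<Rightarrow> real^3 \<Rightarrow> real^3" where
  "LC br X Y = (THE W. \<forall>Z. gL W Z = koszul br X Y Z)"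

definition Jp :: "real^3 \<Rightarrow> real^3" where
  "Jp x = vector [x$1, x$2, - x$3]"

definition nablaJ :: "(real^3 \<Rightarrow> real^3 \<Rightarrow> real^3) \<Rightarrow> real^3 \<Rightarrow> real^3 \<Rightarrow> real^3" where
  "nablaJ br X Y = LC br X (Jp Y) - Jp (LC br X Y)"

definition nabla0 :: "(real^3 \<Rightarrow> real^3 \<Rightarrow> real^3) \<Rightarrow> real^3 \<Rightarrow> real^3 \<Rightarrow> real^3" where
  "nabla0 br X Y = LC br X Y - (1/2) *\<^sub>R nablaJ br X (Jp Y)"

definition curv0 :: "(real^3 \<Rightarrow> real^3 \<Rightarrow> real^3) \<Rightarrow> real^3 \<Rightarrow> real^3 \<Rightarrow> real^3 \<Rightarrow> real^3" where
  "curv0 br X Y Z = nabla0 br X (nabla0 br Y Z) - nabla0 br Y (nabla0 br X Z) - nabla0 br (br X Y) Z"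

definition ricci0 :: "(real^3 \<Rightarrow> real^3 \<Rightarrow> real^3) \<Rightarrow> real^3 \<Rightarrow> real^3 \<Rightarrow> real" where
  "ricci0 br X Y = - gL (curv0 br X e1 Y) e1 - gL (curv0 br X e2 Y) e2 + gL (curv0 br X e3 Y) e3"

definition symricci0 :: "(real^3 \<Rightarrow> real^3 \<Rightarrow> real^3) \<Rightarrow> real^3 \<Rightarrow> real^3 \<Rightarrow> real" where
  "symricci0 br X Y = (ricci0 br X Y + ricci0 br Y X) / 2"

definition RicOp0 :: "(real^3 \<Rightarrow> real^3 \<Rightarrow> real^3) \<Rightarrow> real^3 \<Rightarrow> real^3" where
  "RicOp0 br X = (THE W. \<forall>Y. gL W Y = symricci0 br X Y)"

definition scal0 :: "(real^3 \<Rightarrow> real^3 \<Rightarrow> real^3) \<Rightarrow> real" where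
  "scal0 br = symricci0 br e1 e1 + symricci0 br e2 e2 - symricci0 br e3 e3"

definition is_derivation :: "(real^3 \<Rightarrow> real^3 \<Rightarrow> real^3) \<Rightarrow> (real^3 \<Rightarrow> real^3) \<Rightarrow> bool" where
  "is_derivation br D \<longleftrightarrow> linear D \<and> (\<forall>X Y. D (br X Y) = br (D X) Y + br X (D Y))"

definition algebraic_schouten_soliton0 ::
  "(real^3 \<Rightarrow> real^3 \<Rightarrow> real^3) \<Rightarrow> real \<Rightarrow> real \<Rightarrow> bool" where
  "algebraic_schouten_soliton0 br lam0 c \<longleftrightarrow>
     (\<exists>D. is_derivation br D \<and> (\<forall>X. RicOp0 br X = (scal0 br * lam0 + c) *\<^sub>R X + D X))"

end

theory Submission imports Defs begin

text \<open>The canonical connection of \<open>g\<^sub>1\<close> is \<open>\<nabla>\<^sup>0\<^sub>X = (\<alpha> x\<^sub>1 - \<beta> x\<^sub>3 / 2) \<rho>\<close>,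
  where \<open>\<rho>\<close> is the rotation \<open>e\<^sub>1 \<mapsto> -e\<^sub>2, e\<^sub>2 \<mapsto> e\<^sub>1, e\<^sub>3 \<mapsto> 0\<close>.
  All \<open>\<nabla>\<^sup>0\<^sub>X\<close> are multiples of the one map \<open>\<rho>\<close>, so they commute and the curvature
  is \<open>R\<^sup>0(X,Y) = -(\<alpha>[X,Y]\<^sub>1 - \<beta>[X,Y]\<^sub>3 / 2) \<rho>\<close>; the Ricci operator and the scalar
  curvature \<open>s\<^sup>0 = -(2\<alpha>\<^sup>2 + \<beta>\<^sup>2)\<close> follow explicitly. The soliton equation says
  exactly that \<open>Ric\<^sup>0 - k Id\<close> is a derivation, \<open>k = s\<^sup>0\<lambda>\<^sub>0 + c\<close>. Testing the
  derivation rule on \<open>[e\<^sub>1,e\<^sub>2]\<close> forces \<open>\<alpha>\<^sup>2\<beta> = 0\<close> and \<open>k = -\<alpha>\<^sup>2/2\<close>,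
  and conversely for \<open>\<beta> = 0\<close> this choice of \<open>k\<close> gives a derivation.\<close>

lemma vec3_eq_iff: "(x::real^3) = y \<longleftrightarrow> x$1 = y$1 \<and> x$2 = y$2 \<and> x$3 = y$3"
  by (simp add: vec_eq_iff forall_3)

lemmas basis_defs = e1_def e2_def e3_def

lemma gL_basis: "gL W e1 = W$1" "gL W e2 = W$2" "gL W e3 = - W$3"
  by (simp_all add: gL_def basis_defs)

lemma gL_nondegenerate:
  assumes "\<And>Z. gL V Z = gL W Z"
  shows "V = W"
  using assms[of e1] assms[of e2] assms[of e3] by (simp add: gL_basis vec3_eq_iff)

lemma the_gL_representative:
  assumes "\<And>Z. gL V Z = f Z"
  shows "(THE W. \<forall>Z. gL W Z = f Z) = V"
proof (rule the_equality)
  show "\<forall>Z. gL V Z = f Z" using assms by blast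
  show "W = V" if "\<forall>Z. gL W Z = f Z" for W
    using that assms by (intro gL_nondegenerate) simp
qed

lemma soliton0_iff_derivation:
  "algebraic_schouten_soliton0 br lam0 c \<longleftrightarrow>
     is_derivation br (\<lambda>X. RicOp0 br X - (scal0 br * lam0 + c) *\<^sub>R X)"
proof
  assume "algebraic_schouten_soliton0 br lam0 c"
  then obtain D where der: "is_derivation br D"
    and ric: "\<forall>X. RicOp0 br X = (scal0 br * lam0 + c) *\<^sub>R X + D X"
    unfolding algebraic_schouten_soliton0_def by blast
  have "D = (\<lambda>X. RicOp0 br X - (scal0 br * lam0 + c) *\<^sub>R X)"
    using ric by (auto simp: algebra_simps)
  with der show "is_derivation br (\<lambda>X. RicOp0 br X - (scal0 br * lam0 + c) *\<^sub>R X)"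
    by simp
next
  assume "is_derivation br (\<lambda>X. RicOp0 br X - (scal0 br * lam0 + c) *\<^sub>R X)"
  then show "algebraic_schouten_soliton0 br lam0 c"
    unfolding algebraic_schouten_soliton0_def by force
qed

lemma LC_br1:
  "LC (br1 a b) X Y =
     vector [koszul (br1 a b) X Y e1, koszul (br1 a b) X Y e2, - koszul (br1 a b) X Y e3]"
  unfolding LC_def
  by (rule the_gL_representative)
     (simp add: gL_def koszul_def br1_def basis_defs; simp add: algebra_simps)

lemma nabla0_br1:
  "nabla0 (br1 a b) X Y = (a * X$1 - b * X$3 / 2) *\<^sub>R vector [Y$2, - Y$1, 0]"
  unfolding vec3_eq_iff
  by (simp add: nabla0_def nablaJ_def LC_br1 Jp_def koszul_def gL_def br1_def basis_defs;
      simp add: field_simps; simp add: algebra_simps)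

lemma curv0_br1:
  "curv0 (br1 a b) X Y Z =
     - ((a * br1 a b X Y $ 1 - b * br1 a b X Y $ 3 / 2) *\<^sub>R vector [Z$2, - Z$1, 0])"
  by (simp add: curv0_def nabla0_br1 vec3_eq_iff algebra_simps)

lemma ricci0_br1:
  "ricci0 (br1 a b) X Y =
     (- a\<^sup>2 * X$2 + a\<^sup>2 * X$3 - b\<^sup>2 * X$2 / 2) * Y$2 - (a\<^sup>2 * X$1 + b\<^sup>2 * X$1 / 2 - a * b * X$3 / 2) * Y$1"
  by (simp add: ricci0_def curv0_br1 gL_def br1_def basis_defs; simp add: field_simps power2_eq_square)

definition ric_g1 :: "real \<Rightarrow> real \<Rightarrow> real^3 \<Rightarrow> real^3" where
  "ric_g1 a b X = vector
     [- (a\<^sup>2 + b\<^sup>2 / 2) * X$1 + a * b / 4 * X$3,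
      - (a\<^sup>2 + b\<^sup>2 / 2) * X$2 + a\<^sup>2 / 2 * X$3,
      - a * b / 4 * X$1 - a\<^sup>2 / 2 * X$2]"

lemma symricci0_br1: "symricci0 (br1 a b) X Y = gL (ric_g1 a b X) Y"
  by (simp add: symricci0_def ricci0_br1 gL_def ric_g1_def field_simps power2_eq_square;
      simp add: algebra_simps)

lemma RicOp0_br1: "RicOp0 (br1 a b) X = ric_g1 a b X"
  unfolding RicOp0_def symricci0_br1 by (rule the_gL_representative) (rule refl)

lemma scal0_br1: "scal0 (br1 a b) = - (2 * a\<^sup>2 + b\<^sup>2)"
  by (simp add: scal0_def symricci0_br1 gL_basis) (simp add: ric_g1_def basis_defs field_simps)

lemma derivation_ric_g1_necessary:
  assumes "a \<noteq> 0" and "is_derivation (br1 a b) (\<lambda>X. ric_g1 a b X - k *\<^sub>R X)"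
  shows "b = 0 \<and> k = - a\<^sup>2 / 2"
proof -
  let ?D = "\<lambda>X. ric_g1 a b X - k *\<^sub>R X"
  have leibniz_e1_e2: "?D (br1 a b e1 e2) = br1 a b (?D e1) e2 + br1 a b e1 (?D e2)"
    using assms(2) unfolding is_derivation_def by blast
  have "a * (a\<^sup>2 / 2 + k) = 0" and "a\<^sup>2 * b = 0"
    using arg_cong[OF leibniz_e1_e2, of "\<lambda>v. v$1"] arg_cong[OF leibniz_e1_e2, of "\<lambda>v. v$2"]
    by (simp_all add: ric_g1_def br1_def basis_defs field_simps power2_eq_square; simp add: algebra_simps)+
  with assms(1) have "a\<^sup>2 / 2 + k = 0" and "b = 0"
    by simp_all
  then show ?thesis by auto
qed

lemma derivation_ric_g1_beta0: "is_derivation (br1 a 0) (\<lambda>X. ric_g1 a 0 X + (a\<^sup>2 / 2) *\<^sub>R X)"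
  unfolding is_derivation_def
proof
  show "linear (\<lambda>X. ric_g1 a 0 X + (a\<^sup>2 / 2) *\<^sub>R X)"
    by (rule linearI) (simp_all add: ric_g1_def vec3_eq_iff algebra_simps)
qed (simp add: ric_g1_def br1_def basis_defs vec3_eq_iff field_simps power2_eq_square;
     simp add: algebra_simps)

theorem theorem4p2:
  fixes \<alpha> \<beta> lam0 c :: real
  assumes "\<alpha> \<noteq> 0"
  shows "algebraic_schouten_soliton0 (br1 \<alpha> \<beta>) lam0 c \<longleftrightarrow>
           (\<beta> = 0 \<and> c = - (1/2) * \<alpha>^2 + 2 * \<alpha>^2 * lam0)"
proof -
  define k where "k = - (2 * \<alpha>\<^sup>2 + \<beta>\<^sup>2) * lam0 + c"
  have "algebraic_schouten_soliton0 (br1 \<alpha> \<beta>) lam0 c \<longleftrightarrow>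
          is_derivation (br1 \<alpha> \<beta>) (\<lambda>X. ric_g1 \<alpha> \<beta> X - k *\<^sub>R X)"
    by (simp add: soliton0_iff_derivation RicOp0_br1 scal0_br1 k_def)
  also have "\<dots> \<longleftrightarrow> \<beta> = 0 \<and> k = - \<alpha>\<^sup>2 / 2"
    using derivation_ric_g1_necessary[OF assms] derivation_ric_g1_beta0[of \<alpha>] by auto
  also have "\<dots> \<longleftrightarrow> \<beta> = 0 \<and> c = - (1/2) * \<alpha>^2 + 2 * \<alpha>^2 * lam0"
    by (auto simp: k_def algebra_simps)
  finally show ?thesis .
qed

end
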